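(* Let $f:2^V\to\mathbb{Z}_{\ge0}$ be a connectivity function, $W\subseteq V$, and $(C_1,C_2,C_3)$ a tripartition of $V$ such that for each $i\in\{1,2,3\}$, $f(C_i)<f(W)/2$ and $W$ directly orients $C_i$. Then $(C_1,C_2,C_3)$ is a $W$-improvement.
   Context: A connectivity function $f:2^V\to\mathbb{Z}_{\ge0}$ ($V$ finite) satisfies $f(\emptyset)=0$, $f(X)=f(V\setminus X)$, and $f(X\cup Y)+f(X\cap Y)\le f(X)+f(Y)$. Write $\overline{X}=V\setminus X$. The set $W$ directly orients $C$ if $f(C\cap W)<f(\overline{C}\cap W)$ and $f(C\cap\overline{W})<f(\overline{C}\cap\overline{W})$. A tripartition of $V$ is a triple of pairwise disjoint (possibly empty) sets with union $V$. For $W\subseteq V$, a $W$-improvement is a tripartition $(C_1,C_2,C_3)$ of $V$ with $f(C_i)<f(W)/2$, $f(C_i\cap W)<f(W)$, $f(C_i\cap\overline{W})<f(W)$ for each $i$. *)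

theory Defs
  imports Complex_Main
begin

definition connectivity_function :: "'a set \<Rightarrow> ('a set \<Rightarrow> nat) \<Rightarrow> bool" where
  "connectivity_function V f \<longleftrightarrow> finite V \<and> f {} = 0 \<and>
     (\<forall>X. X \<subseteq> V \<longrightarrow> f X = f (V - X)) \<and>
     (\<forall>X Y. X \<subseteq> V \<longrightarrow> Y \<subseteq> V \<longrightarrow> f (X \<union> Y) + f (X \<inter> Y) \<le> f X + f Y)"

definition directly_orients :: "'a set \<Rightarrow> ('a set \<Rightarrow> nat) \<Rightarrow> 'a set \<Rightarrow> 'a set \<Rightarrow> bool" where
  "directly_orients V f W C \<longleftrightarrow>
     f (C \<inter> W) < f ((V - C) \<inter> W) \<and> f (C \<inter> (V - W)) < f ((V - C) \<inter> (V - W))"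

definition tripartition :: "'a set \<Rightarrow> 'a set \<Rightarrow> 'a set \<Rightarrow> 'a set \<Rightarrow> bool" where
  "tripartition V C1 C2 C3 \<longleftrightarrow> C1 \<inter> C2 = {} \<and> C1 \<inter> C3 = {} \<and> C2 \<inter> C3 = {}
     \<and> C1 \<union> C2 \<union> C3 = V"

definition W_improvement :: "'a set \<Rightarrow> ('a set \<Rightarrow> nat) \<Rightarrow> 'a set \<Rightarrow> 'a set \<Rightarrow> 'a set \<Rightarrow> 'a set \<Rightarrow> bool" where
  "W_improvement V f W C1 C2 C3 \<longleftrightarrow> tripartition V C1 C2 C3 \<and>
     (\<forall>C \<in> {C1, C2, C3}. real (f C) < real (f W) / 2 \<and> f (C \<inter> W) < f W \<and> f (C \<inter> (V - W)) < f W)"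

end

theory Submission
  imports Defs
begin

text \<open>Write \<open>A = C \<inter> W\<close>, \<open>B = C \<inter> (V - W)\<close>, \<open>B' = (V - C) \<inter> (V - W)\<close>. Symmetry and
  submodularity applied to \<open>C\<close> and \<open>W\<close> give \<open>f A + f B' \<le> f C + f W\<close>, since \<open>B'\<close> is the
  complement of \<open>C \<union> W\<close>. Subadditivity on \<open>V - W = B \<union> B'\<close> together with \<open>f B < f B'\<close>
  forces \<open>f B' > f W / 2\<close>, hence \<open>f A < f C + f W / 2 < f W\<close>. The bound for
  \<open>C \<inter> (V - W)\<close> is the same argument with \<open>W\<close> replaced by \<open>V - W\<close>.\<close>

lemma connectivity_function_compl:
  assumes "connectivity_function V f" "X \<subseteq> V"
  shows "f (V - X) = f X"
  using assms unfolding connectivity_function_def by metis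

lemma connectivity_function_submodular:
  assumes "connectivity_function V f" "X \<subseteq> V" "Y \<subseteq> V"
  shows "f (X \<union> Y) + f (X \<inter> Y) \<le> f X + f Y"
  using assms unfolding connectivity_function_def by blast

lemma connectivity_function_disjoint_Un_le:
  assumes "connectivity_function V f" "X \<subseteq> V" "Y \<subseteq> V" "X \<inter> Y = {}"
  shows "f (X \<union> Y) \<le> f X + f Y"
proof -
  have "f {} = 0"
    using assms(1) unfolding connectivity_function_def by blast
  then show ?thesis
    using connectivity_function_submodular[OF assms(1-3)] assms(4) by simp
qed

lemma directly_orients_compl:
  assumes "W \<subseteq> V"
  shows "directly_orients V f (V - W) C \<longleftrightarrow> directly_orients V f W C"
proof -
  have "V - (V - W) = W"
    using assms by blast
  then show ?thesis
    unfolding directly_orients_def by (auto simp: conj_commute)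
qed

lemma directly_orients_inter_less:
  assumes f: "connectivity_function V f"
    and "W \<subseteq> V" "C \<subseteq> V"
    and small: "2 * f C < f W"
    and orients: "directly_orients V f W C"
  shows "f (C \<inter> W) < f W"
proof -
  let ?B = "C \<inter> (V - W)" and ?B' = "(V - C) \<inter> (V - W)"
  have "V - W = ?B \<union> ?B'"
    by blast
  then have "f W = f (?B \<union> ?B')"
    using connectivity_function_compl[OF f \<open>W \<subseteq> V\<close>] by simp
  also have "\<dots> \<le> f ?B + f ?B'"
    by (rule connectivity_function_disjoint_Un_le[OF f]) auto
  finally have split: "f W \<le> f ?B + f ?B'" .
  have B_less: "f ?B < f ?B'"
    using orients unfolding directly_orients_def by blast
  have "f (C \<union> W) = f ?B'"
    using connectivity_function_compl[OF f, of "C \<union> W"] assms(2,3) by (simp add: Diff_Un)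
  then have "f ?B' + f (C \<inter> W) \<le> f C + f W"
    using connectivity_function_submodular[OF f assms(3,2)] by simp
  with split B_less small show ?thesis
    by linarith
qed

lemma directly_orients_inter_compl_less:
  assumes f: "connectivity_function V f"
    and W: "W \<subseteq> V" and "C \<subseteq> V"
    and small: "2 * f C < f W"
    and orients: "directly_orients V f W C"
  shows "f (C \<inter> (V - W)) < f W"
  using directly_orients_inter_less[OF f Diff_subset \<open>C \<subseteq> V\<close>, of W] small orients
  by (simp add: connectivity_function_compl[OF f W] directly_orients_compl[OF W])

theorem lemma4:
  fixes V W C1 C2 C3 :: "'a set" and f :: "'a set \<Rightarrow> nat"
  assumes "connectivity_function V f"
    and "W \<subseteq> V"
    and "tripartition V C1 C2 C3"
    and "\<forall>C \<in> {C1, C2, C3}. real (f C) < real (f W) / 2 \<and> directly_orients V f W C"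
  shows "W_improvement V f W C1 C2 C3"
proof -
  have "real (f C) < real (f W) / 2 \<and> f (C \<inter> W) < f W \<and> f (C \<inter> (V - W)) < f W"
    if C: "C \<in> {C1, C2, C3}" for C
  proof -
    have "C \<subseteq> V"
      using assms(3) C unfolding tripartition_def by blast
    moreover have "real (f C) < real (f W) / 2" and "directly_orients V f W C"
      using assms(4) C by blast+
    moreover from this(1) have "2 * f C < f W"
      by linarith
    ultimately show ?thesis
      using directly_orients_inter_less directly_orients_inter_compl_less assms(1,2) by blast
  qed
  with assms(3) show ?thesis
    unfolding W_improvement_def by blast
qed

end
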